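(* Let $G=(V,E,w_G)$ be a directed graph with non-negative integer edge weights, $n=|V|$, let $s\in V$ be a source node, and let $h$ be an integer with $1\le h\le n$. Consider the following procedure. Step 1: Let $C\subseteq V$ be a set of skeleton nodes containing $s$ and such that, for every pair of nodes $u,v$ for which the shortest path from $u$ to $v$ in $G$ consists of exactly $\lceil h/2\rceil$ nodes, $C$ contains at least one node of one of these shortest paths. Step 2: For each $x\in C$ compute estimates $\tilde d(x,\cdot)$ with $\mathrm{dist}_G(x,v)\le \tilde d(x,v)\le 2\,\mathrm{dist}^h_G(x,v)$ for every $v\in V$. Step 3: Let $H=(C,C^2,w_H)$ be the complete directed graph on $C$ with $w_H(x,y)=\tilde d(x,y)$. Step 4: Compute $\mathrm{dist}_H(s,x)$ for every $x\in C$. Step 5: Let $G'=(V,E\cup(\{s\}\times C),w_{G'})$ where $w_{G'}(u,v)=\mathrm{dist}_H(u,v)$ for $(u,v)\in(\{s\}\times C)\setminus E$, $w_{G'}(u,v)=2w_G(u,v)$ for $(u,v)\in E\setminus(\{s\}\times C)$, and $w_{G'}(u,v)=\min(\mathrm{dist}_H(u,v),2w_G(u,v))$ for $(u,v)\in E\cap(\{s\}\times C)$. Step 6: Return $\hat d(s,v):=\tfrac12\,\mathrm{dist}^h_{G'}(s,v)$ for every $v\in V$. Then for every node $v\in V$, $\tfrac12\,\mathrm{dist}_G(s,v)\le \hat d(s,v)\le \mathrm{dist}_G(s,v)$, and for every edge $(u,v)\in E$, $\hat d(s,v)\le \hat d(s,u)+w_G(u,v)$.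
   Context: For a weighted directed graph, $\mathrm{dist}(u,v)$ denotes the minimum weight of a directed path from $u$ to $v$. For an integer $h\ge1$, the $h$-hop distance $\mathrm{dist}^h(u,v)$ is the minimum weight among all directed paths from $u$ to $v$ with at most $h$ edges. *)

theory Defs
  imports Main "HOL-Library.Extended_Real"
begin

text \<open>Its number of edges is length p - 1.\<close>
definition is_path :: "('a \<times> 'a) set \<Rightarrow> 'a \<Rightarrow> 'a \<Rightarrow> 'a list \<Rightarrow> bool" where
  "is_path E u v p \<longleftrightarrow> p \<noteq> [] \<and> hd p = u \<and> last p = v \<and> distinct p \<and>
     (\<forall>i < length p - 1. (p ! i, p ! Suc i) \<in> E)"

definition path_weight :: "('a \<Rightarrow> 'a \<Rightarrow> ereal) \<Rightarrow> 'a list \<Rightarrow> ereal" where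
  "path_weight w p = sum_list (map (\<lambda>(a, b). w a b) (zip p (tl p)))"

definition gdist :: "('a \<times> 'a) set \<Rightarrow> ('a \<Rightarrow> 'a \<Rightarrow> ereal) \<Rightarrow> 'a \<Rightarrow> 'a \<Rightarrow> ereal" where
  "gdist E w u v = (INF p \<in> {p. is_path E u v p}. path_weight w p)"

definition hop_dist :: "('a \<times> 'a) set \<Rightarrow> ('a \<Rightarrow> 'a \<Rightarrow> ereal) \<Rightarrow> nat \<Rightarrow> 'a \<Rightarrow> 'a \<Rightarrow> ereal" where
  "hop_dist E w h u v = (INF p \<in> {p. is_path E u v p \<and> length p - 1 \<le> h}. path_weight w p)"

definition G'_weight :: "('a \<times> 'a) set \<Rightarrow> ('a \<Rightarrow> 'a \<Rightarrow> ereal) \<Rightarrow> 'a \<Rightarrow> 'a set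
    \<Rightarrow> ('a \<Rightarrow> 'a \<Rightarrow> ereal) \<Rightarrow> 'a \<Rightarrow> 'a \<Rightarrow> ereal" where
  "G'_weight E wG s C distH u v =
     (if (u, v) \<in> ({s} \<times> C) - E then distH u v
      else if (u, v) \<in> E - ({s} \<times> C) then 2 * wG u v
      else min (distH u v) (2 * wG u v))"

end

theory Submission
  imports Defs
begin

(* A simple path of G' from s can use a new edge (s, x), x in C, only as its first edge, which
   costs at least dist_H(s, x) >= dist_G(s, x); all later edges cost twice their G-weight.  Hence
   dist_G(s, v) <= dist^h_G'(s, v).
   Conversely, the skeleton property lets every block of k = ceil(h/2) consecutive nodes of a
   shortest path be rerouted, without loss, through a node of C.  Cutting off the last block
   repeatedly, induction on the number of hops gives dist_H(x, y) <= 2 dist_G(x, y) for x, y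
   in C.  For y in C and a shortest y-v path, take a skeleton node z on it at most h - 1 hops
   before v; the edge (s, z) followed by that part of the path shows
   dist^h_G'(s, v) <= dist_H(s, y) + dist_H(y, z) + 2 dist_G(z, v) <= dist_H(s, y) + 2 dist_G(y, v).
   The choice y = s is the upper bound; for an edge (u, v), choosing y as the skeleton node
   through which an optimal h-hop path of G' to u leaves s gives the edge inequality. *)

lemma split_list_length_suffix: "n \<le> length xs \<Longrightarrow> \<exists>X1 X2. xs = X1 @ X2 \<and> length X2 = n"
  by (intro exI[of _ "take (length xs - n) xs"] exI[of _ "drop (length xs - n) xs"]) simp

lemma ereal_INF_attained:
  fixes f :: "'b \<Rightarrow> ereal"
  assumes "finite S" "S \<noteq> {}"
  obtains x where "x \<in> S" "(INF x\<in>S. f x) = f x"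
proof -
  have "Inf (f ` S) \<in> f ` S"
    by (rule finite_Inf_in) (use assms in \<open>auto simp: inf_min min_def\<close>)
  then show ?thesis using that by auto
qed

lemma ereal_add3_eq:
  fixes a b c A B C :: ereal
  assumes "0 \<le> a" "a \<le> A" "0 \<le> b" "b \<le> B" "0 \<le> c" "c \<le> C"
    and "A + B + C \<le> a + b + c" "A + B + C \<noteq> \<infinity>"
  shows "A = a" "B = b" "C = c"
proof -
  have "A \<noteq> \<infinity>" "B \<noteq> \<infinity>" "C \<noteq> \<infinity>" using assms(1-6,8) by auto
  moreover have "0 \<le> A" "0 \<le> B" "0 \<le> C" using assms(1-6) by auto
  ultimately obtain A' B' C' where "A = ereal A'" "B = ereal B'" "C = ereal C'"
    by (metis ereal_cases ereal_infty_less_eq2(2) not_MInfty_nonneg)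
  moreover obtain a' b' c' where "a = ereal a'" "b = ereal b'" "c = ereal c'"
    using assms(1-6) calculation
    by (metis ereal_cases ereal_infty_less_eq2(1) ereal_less_eq(2) not_MInfty_nonneg)
  ultimately show "A = a" "B = b" "C = c" using assms(2,4,6,7) by auto
qed

lemma ereal_half_le_add:
  fixes a b c :: ereal
  assumes "0 \<le> a" "0 \<le> b" "c \<le> a + 2 * b"
  shows "c / 2 \<le> a / 2 + b"
  using assms by (cases a; cases b; cases c) auto

fun walk :: "('a \<times> 'a) set \<Rightarrow> 'a list \<Rightarrow> bool" where
  "walk E [] \<longleftrightarrow> False"
| "walk E [a] \<longleftrightarrow> True"
| "walk E (a # b # r) \<longleftrightarrow> (a, b) \<in> E \<and> walk E (b # r)"

lemma walk_iff_nth: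
  "p \<noteq> [] \<Longrightarrow> walk E p \<longleftrightarrow> (\<forall>i < length p - 1. (p ! i, p ! Suc i) \<in> E)"
proof (induction p rule: induct_list012)
  case (3 x y zs)
  then show ?case by (auto simp: less_Suc_eq_0_disj)
qed auto

lemma is_path_iff_walk: "is_path E u v p \<longleftrightarrow> walk E p \<and> hd p = u \<and> last p = v \<and> distinct p"
  unfolding is_path_def using walk_iff_nth[of p E] by (cases p) auto

lemma walk_Cons: "walk E (a # r) \<longleftrightarrow> r = [] \<or> (a, hd r) \<in> E \<and> walk E r"
  by (cases r) auto

lemma walk_append_iff:
  "xs \<noteq> [] \<Longrightarrow> walk E (xs @ ys) \<longleftrightarrow> walk E xs \<and> walk E (last xs # ys)"
  by (induction xs rule: induct_list012) auto

lemma walk_append3_iff: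
  assumes "X2 \<noteq> []"
  shows "walk E (X1 @ X2 @ Y) \<longleftrightarrow> walk E (X1 @ [hd X2]) \<and> walk E X2 \<and> walk E (last X2 # Y)"
proof -
  obtain a r where "X2 = a # r" using assms by (cases X2) auto
  then show ?thesis
    using walk_append_iff[of "X1 @ [a]" E "r @ Y"] walk_append_iff[of "a # r" E Y] by simp
qed

lemma walk_appendD2: "walk E (xs @ ys) \<Longrightarrow> ys \<noteq> [] \<Longrightarrow> walk E ys"
  by (induction xs) (auto simp: walk_Cons)

lemma walk_mono:
  "walk E p \<Longrightarrow> (\<And>a b. (a, b) \<in> E \<Longrightarrow> a \<in> set p \<Longrightarrow> b \<in> set p \<Longrightarrow> (a, b) \<in> E')
    \<Longrightarrow> walk E' p"
  by (induction p rule: induct_list012) auto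

lemma walk_subset: "walk E p \<Longrightarrow> E \<subseteq> V \<times> V \<Longrightarrow> set p \<subseteq> insert (hd p) V"
  by (induction p rule: induct_list012) auto

lemma path_weight_simps [simp]:
  "path_weight w [] = 0" "path_weight w [a] = 0"
  "path_weight w (a # b # r) = w a b + path_weight w (b # r)"
  by (simp_all add: path_weight_def)

lemma path_weight_Cons: "r \<noteq> [] \<Longrightarrow> path_weight w (a # r) = w a (hd r) + path_weight w r"
  by (cases r) auto

lemma path_weight_append:
  "xs \<noteq> [] \<Longrightarrow> path_weight w (xs @ ys) = path_weight w xs + path_weight w (last xs # ys)"
  by (induction xs rule: induct_list012) (auto simp: add.assoc)

lemma path_weight_append3:
  assumes "X2 \<noteq> []"
  shows "path_weight w (X1 @ X2 @ Y)
    = path_weight w (X1 @ [hd X2]) + path_weight w X2 + path_weight w (last X2 # Y)"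
proof -
  obtain a r where "X2 = a # r" using assms by (cases X2) auto
  then show ?thesis
    using path_weight_append[of "X1 @ [a]" w "r @ Y"] path_weight_append[of "a # r" w Y]
    by (simp add: add.assoc)
qed

lemma path_weight_mono:
  "walk E p \<Longrightarrow> (\<And>a b. (a, b) \<in> E \<Longrightarrow> a \<in> set p \<Longrightarrow> b \<in> set p \<Longrightarrow> w a b \<le> w' a b)
    \<Longrightarrow> path_weight w p \<le> path_weight w' p"
  by (induction p rule: induct_list012) (auto intro!: add_mono)

lemma path_weight_cong:
  "walk E p \<Longrightarrow> (\<And>a b. (a, b) \<in> E \<Longrightarrow> a \<in> set p \<Longrightarrow> b \<in> set p \<Longrightarrow> w a b = w' a b)
    \<Longrightarrow> path_weight w p = path_weight w' p"
  by (induction p rule: induct_list012) auto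

lemma gdist_le_path_weight: "is_path E u v p \<Longrightarrow> gdist E w u v \<le> path_weight w p"
  unfolding gdist_def by (rule INF_lower) simp

lemma hop_dist_le_path_weight:
  "is_path E u v p \<Longrightarrow> length p - 1 \<le> h \<Longrightarrow> hop_dist E w h u v \<le> path_weight w p"
  unfolding hop_dist_def by (rule INF_lower) simp

lemma gdist_le_hop_dist: "gdist E w u v \<le> hop_dist E w h u v"
  unfolding gdist_def hop_dist_def by (rule INF_superset_mono) auto

lemma hop_dist_antimono: "m \<le> n \<Longrightarrow> hop_dist E w n u v \<le> hop_dist E w m u v"
  unfolding hop_dist_def by (rule INF_superset_mono) auto

lemma finite_paths:
  assumes "finite V" "E \<subseteq> V \<times> V"
  shows "finite {p. is_path E u v p}"
proof (rule finite_subset)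
  show "{p. is_path E u v p} \<subseteq> {xs. set xs \<subseteq> insert u V \<and> length xs \<le> card (insert u V)}"
  proof
    fix p assume "p \<in> {p. is_path E u v p}"
    then have p: "walk E p" "hd p = u" "distinct p" by (auto simp: is_path_iff_walk)
    then have sp: "set p \<subseteq> insert u V" using walk_subset assms(2) by blast
    have "length p = card (set p)" using p(3) by (simp add: distinct_card)
    also have "\<dots> \<le> card (insert u V)" using sp assms(1) by (intro card_mono) auto
    finally show "p \<in> {xs. set xs \<subseteq> insert u V \<and> length xs \<le> card (insert u V)}"
      using sp by simp
  qed
qed (simp add: finite_lists_length_le assms)

locale weighted_graph =
  fixes V :: "'a set" and E :: "('a \<times> 'a) set" and w :: "'a \<Rightarrow> 'a \<Rightarrow> ereal"
  assumes finite_V: "finite V" and E_subset: "E \<subseteq> V \<times> V"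
    and weight_nonneg: "(a, b) \<in> E \<Longrightarrow> 0 \<le> w a b"
begin

lemma path_weight_nonneg: "walk E p \<Longrightarrow> 0 \<le> path_weight w p"
  by (induction p rule: induct_list012) (auto intro: add_nonneg_nonneg weight_nonneg)

lemma path_weight_suffix_le:
  "walk E (xs @ ys) \<Longrightarrow> ys \<noteq> [] \<Longrightarrow> path_weight w ys \<le> path_weight w (xs @ ys)"
proof (induction xs)
  case (Cons a xs)
  then have "(a, hd (xs @ ys)) \<in> E" "walk E (xs @ ys)" by (auto simp: walk_Cons)
  then show ?case
    using Cons by (simp add: path_weight_Cons add_increasing weight_nonneg)
qed simp

lemma path_weight_double: "walk E p \<Longrightarrow> path_weight (\<lambda>a b. 2 * w a b) p = 2 * path_weight w p"
proof (induction p rule: induct_list012)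
  case (3 x y zs)
  then show ?case
    using weight_nonneg[of x y] path_weight_nonneg[of "y # zs"] by (simp add: ereal_right_distrib)
qed simp_all

lemma walk_shortcut:
  "walk E p \<Longrightarrow> \<exists>q. is_path E (hd p) (last p) q \<and> path_weight w q \<le> path_weight w p
    \<and> length q \<le> length p"
proof (induction "length p" arbitrary: p rule: less_induct)
  case less
  show ?case
  proof (cases "distinct p")
    case True
    with less.prems show ?thesis by (auto simp: is_path_iff_walk)
  next
    case False
    then obtain xs a ys zs where p: "p = xs @ a # ys @ a # zs"
      using not_distinct_decomp[of p] by auto
    define p' where "p' = xs @ [a] @ zs"
    have "walk E (xs @ [a])" "walk E (a # zs)" "walk E (a # ys @ [a])"
      using less.prems walk_append3_iff[of "a # ys @ [a]" E xs zs] by (simp_all add: p)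
    then have "walk E p'"
      unfolding p'_def using walk_append3_iff[of "[a]" E xs zs] by simp
    moreover have "path_weight w p' \<le> path_weight w p"
      using path_weight_append3[of "[a]" w xs zs] path_weight_append3[of "a # ys @ [a]" w xs zs]
        path_weight_nonneg[OF \<open>walk E (a # ys @ [a])\<close>]
      by (simp add: p p'_def add_increasing2 add_right_mono)
    moreover have "hd p' = hd p" "last p' = last p" "length p' < length p"
      by (simp_all add: p p'_def hd_append last_append)
    ultimately show ?thesis using less.hyps[of p'] by fastforce
  qed
qed

lemma gdist_le_walk: "walk E p \<Longrightarrow> gdist E w (hd p) (last p) \<le> path_weight w p"
  using walk_shortcut[of p] gdist_le_path_weight[of E "hd p" "last p" _ w] by (meson order_trans)

lemma hop_dist_le_walk:
  "walk E p \<Longrightarrow> length p - 1 \<le> h \<Longrightarrow> hop_dist E w h (hd p) (last p) \<le> path_weight w p"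
  using walk_shortcut[of p] hop_dist_le_path_weight[of E "hd p" "last p" _ h w]
  by (meson diff_le_mono order_trans)

lemma shortest_walk_hop_dist:
  assumes "walk E p" "length p - 1 \<le> h" "path_weight w p = gdist E w (hd p) (last p)"
  shows "hop_dist E w h (hd p) (last p) = gdist E w (hd p) (last p)"
  using hop_dist_le_walk[OF assms(1,2)] gdist_le_hop_dist[of E w "hd p" "last p" h] assms(3)
  by (intro antisym) simp_all

lemma gdist_nonneg: "0 \<le> gdist E w u v"
  unfolding gdist_def by (rule INF_greatest) (auto simp: is_path_iff_walk path_weight_nonneg)

lemma hop_dist_nonneg: "0 \<le> hop_dist E w h u v"
  using order_trans[OF gdist_nonneg gdist_le_hop_dist] .

lemma gdist_refl: "gdist E w u u = 0"
  using gdist_le_path_weight[of E u u "[u]" w] gdist_nonneg[of u u] by (simp add: is_path_def)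

lemma hop_dist_attained:
  assumes "hop_dist E w h u v \<noteq> \<infinity>"
  obtains p where "is_path E u v p" "length p - 1 \<le> h" "path_weight w p = hop_dist E w h u v"
proof -
  let ?P = "{p. is_path E u v p \<and> length p - 1 \<le> h}"
  have nonempty: "?P \<noteq> {}"
  proof
    assume "?P = {}"
    then have "hop_dist E w h u v = \<infinity>"
      unfolding hop_dist_def by (simp only: image_empty Inf_empty top_ereal_def)
    with assms show False ..
  qed
  have "finite ?P"
    by (rule finite_subset[OF _ finite_paths[OF finite_V E_subset, of u v]]) blast
  then obtain p where "p \<in> ?P" "(INF p\<in>?P. path_weight w p) = path_weight w p"
    using nonempty by (rule ereal_INF_attained)
  then show ?thesis using that[of p] unfolding hop_dist_def by simp
qed

lemma gdist_attained:
  assumes "gdist E w u v \<noteq> \<infinity>"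
  obtains p where "is_path E u v p" "path_weight w p = gdist E w u v"
proof -
  let ?P = "{p. is_path E u v p}"
  have "?P \<noteq> {}"
  proof
    assume "?P = {}"
    then have "gdist E w u v = \<infinity>"
      unfolding gdist_def by (simp only: image_empty Inf_empty top_ereal_def)
    with assms show False ..
  qed
  then obtain p where "p \<in> ?P" "(INF p\<in>?P. path_weight w p) = path_weight w p"
    by (rule ereal_INF_attained[OF finite_paths[OF finite_V E_subset]])
  then show ?thesis using that unfolding gdist_def by simp
qed

lemma gdist_triangle: "gdist E w u v \<le> gdist E w u x + gdist E w x v"
proof (cases "gdist E w u x = \<infinity> \<or> gdist E w x v = \<infinity>")
  case True
  then show ?thesis using gdist_nonneg[of u x] gdist_nonneg[of x v] by auto
next
  case False
  then obtain p q where p: "is_path E u x p" "path_weight w p = gdist E w u x"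
    and q: "is_path E x v q" "path_weight w q = gdist E w x v"
    using gdist_attained by metis
  obtain r where q_eq: "q = x # r" using q(1) by (cases q) (auto simp: is_path_def)
  have "p \<noteq> []" using p(1) by (simp add: is_path_def)
  then have "walk E (p @ r)" "hd (p @ r) = u" "last (p @ r) = v"
    using p(1) q(1) walk_append_iff[of p E r] by (auto simp: is_path_iff_walk q_eq)
  moreover have "path_weight w (p @ r) = path_weight w p + path_weight w q"
    using p(1) \<open>p \<noteq> []\<close> path_weight_append[of p w r] by (auto simp: is_path_iff_walk q_eq)
  ultimately show ?thesis using gdist_le_walk[of "p @ r"] p(2) q(2) by simp
qed

lemma shortest_walk_append3:
  assumes "walk E (X1 @ X2 @ Y)" "X2 \<noteq> []"
    and "hd (X1 @ X2 @ Y) = x" "last (X1 @ X2 @ Y) = v"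
    and "path_weight w (X1 @ X2 @ Y) = gdist E w x v" "gdist E w x v \<noteq> \<infinity>"
  shows "path_weight w (X1 @ [hd X2]) = gdist E w x (hd X2)"
    and "path_weight w X2 = gdist E w (hd X2) (last X2)"
    and "path_weight w (last X2 # Y) = gdist E w (last X2) v"
proof -
  let ?a = "hd X2" and ?b = "last X2"
  have "walk E (X1 @ [?a])" "walk E X2" "walk E (?b # Y)"
    using assms(1,2) walk_append3_iff by blast+
  moreover have "hd (X1 @ [?a]) = x" using assms(2,3) by (cases X1) simp_all
  moreover have "last (?b # Y) = v" using assms(2,4) by (cases Y) simp_all
  ultimately have le: "gdist E w x ?a \<le> path_weight w (X1 @ [?a])"
    "gdist E w ?a ?b \<le> path_weight w X2" "gdist E w ?b v \<le> path_weight w (?b # Y)"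
    using gdist_le_walk[of "X1 @ [?a]"] gdist_le_walk[of X2] gdist_le_walk[of "?b # Y"]
    by simp_all
  have "gdist E w x v \<le> gdist E w x ?a + gdist E w ?a ?b + gdist E w ?b v"
    using gdist_triangle[of x v ?a] gdist_triangle[of ?a v ?b] add_left_mono order_trans
    by (metis add.assoc)
  moreover have sum: "path_weight w (X1 @ [?a]) + path_weight w X2 + path_weight w (?b # Y)
      = gdist E w x v"
    using assms(2,5) path_weight_append3 by metis
  ultimately have le_sum: "path_weight w (X1 @ [?a]) + path_weight w X2 + path_weight w (?b # Y)
      \<le> gdist E w x ?a + gdist E w ?a ?b + gdist E w ?b v"
    by simp
  have "path_weight w (X1 @ [?a]) + path_weight w X2 + path_weight w (?b # Y) \<noteq> \<infinity>"
    using sum assms(6) by simp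
  note eq = ereal_add3_eq[OF gdist_nonneg le(1) gdist_nonneg le(2) gdist_nonneg le(3) le_sum this]
  show "path_weight w (X1 @ [?a]) = gdist E w x ?a" by (rule eq(1))
  show "path_weight w X2 = gdist E w ?a ?b" by (rule eq(2))
  show "path_weight w (?b # Y) = gdist E w ?b v" by (rule eq(3))
qed

end

locale skeleton_setup = G: weighted_graph V E wG
  for V :: "'a set" and E :: "('a \<times> 'a) set" and wG :: "'a \<Rightarrow> 'a \<Rightarrow> ereal" +
  fixes s :: 'a and h :: nat and C :: "'a set" and dt :: "'a \<Rightarrow> 'a \<Rightarrow> ereal"
  assumes s_in_V: "s \<in> V" and h_pos: "1 \<le> h" and C_subset: "C \<subseteq> V" and s_in_C: "s \<in> C"
    and skeleton: "\<And>u v p. u \<in> V \<Longrightarrow> v \<in> V \<Longrightarrow> is_path E u v p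
      \<Longrightarrow> path_weight wG p = gdist E wG u v \<Longrightarrow> length p = nat \<lceil>real h / 2\<rceil>
      \<Longrightarrow> \<exists>q. is_path E u v q \<and> path_weight wG q = gdist E wG u v
            \<and> length q = nat \<lceil>real h / 2\<rceil> \<and> set q \<inter> C \<noteq> {}"
    and dt_lower: "x \<in> C \<Longrightarrow> v \<in> V \<Longrightarrow> gdist E wG x v \<le> dt x v"
    and dt_upper: "x \<in> C \<Longrightarrow> v \<in> V \<Longrightarrow> dt x v \<le> 2 * hop_dist E wG h x v"
begin

text \<open>\<open>distH\<close>, \<open>E'\<close> and \<open>w'\<close> are the distance of H and the edges and weights of G';
  \<open>D v\<close> is the h-hop distance from s in G', twice the returned estimate.\<close>

abbreviation "dG \<equiv> gdist E wG"
abbreviation "W \<equiv> path_weight wG"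
abbreviation "k \<equiv> nat \<lceil>real h / 2\<rceil>"
abbreviation "distH \<equiv> gdist (C \<times> C) dt"
abbreviation "E' \<equiv> E \<union> ({s} \<times> C)"
abbreviation "w' \<equiv> G'_weight E wG s C distH"
abbreviation "D v \<equiv> hop_dist E' w' h s v"

lemma k_pos: "1 \<le> k" and k_le_h: "k \<le> h"
  using h_pos by linarith+

sublocale H: weighted_graph V "C \<times> C" dt
proof
  show "C \<times> C \<subseteq> V \<times> V" using C_subset by auto
  show "0 \<le> dt a b" if "(a, b) \<in> C \<times> C" for a b
    using that C_subset dt_lower G.gdist_nonneg order_trans by blast
qed (rule G.finite_V)

sublocale G': weighted_graph V E' w'
proof
  show "E' \<subseteq> V \<times> V" using G.E_subset C_subset s_in_V by auto
  show "0 \<le> w' a b" if "(a, b) \<in> E'" for a b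
    using that G.weight_nonneg H.gdist_nonneg by (auto simp: G'_weight_def)
qed (rule G.finite_V)

lemma distH_le_dt:
  assumes "x \<in> C" "y \<in> C"
  shows "distH x y \<le> dt x y"
  using H.gdist_le_walk[of "[x, y]"] assms by simp

lemma dG_le_distH:
  assumes "x \<in> C" "y \<in> C"
  shows "dG x y \<le> distH x y"
proof -
  have "dG (hd q) (last q) \<le> path_weight dt q" if "walk (C \<times> C) q" for q
    using that
  proof (induction q rule: induct_list012)
    case (3 a b zs)
    then have "dG a (last (b # zs)) \<le> dG a b + dG b (last (b # zs))"
      by (intro G.gdist_triangle)
    also have "\<dots> \<le> dt a b + path_weight dt (b # zs)"
      using 3 dt_lower C_subset by (intro add_mono) auto
    finally show ?case by simp
  qed (simp_all add: G.gdist_refl)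
  then show ?thesis
    unfolding gdist_def[of "C \<times> C"] by (intro INF_greatest) (auto simp: is_path_iff_walk)
qed

lemma dG_le_edge: "(u, v) \<in> E \<Longrightarrow> dG u v \<le> wG u v"
  using G.gdist_le_walk[of "[u, v]"] by simp

lemma distH_le_twice_hop_dist:
  assumes "x \<in> C" "y \<in> C" "m \<le> h"
  shows "distH x y \<le> 2 * hop_dist E wG m x y"
proof -
  have "distH x y \<le> 2 * hop_dist E wG h x y"
    using distH_le_dt dt_upper assms C_subset order_trans by blast
  also have "\<dots> \<le> 2 * hop_dist E wG m x y"
    using hop_dist_antimono[OF assms(3)] by (rule ereal_mult_left_mono) simp
  finally show ?thesis .
qed

text \<open>The middle block \<open>X2\<close> of a shortest path is itself shortest, so the skeleton property
  replaces it by an equally short block through a node of C.\<close>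

lemma skeleton_reroute:
  assumes path: "is_path E x v (X1 @ X2 @ Y)" and shortest: "W (X1 @ X2 @ Y) = dG x v"
    and finite: "dG x v \<noteq> \<infinity>" and "x \<in> V" and len: "length X2 = k"
  obtains z q1 q2 where "z \<in> C" "length (q1 @ z # q2) = k" "walk E (X1 @ q1 @ z # q2 @ Y)"
    "hd (X1 @ q1 @ z # q2 @ Y) = x" "last (X1 @ q1 @ z # q2 @ Y) = v"
    "W (X1 @ q1 @ z # q2 @ Y) = dG x v"
proof -
  let ?a = "hd X2" and ?b = "last X2"
  have "X2 \<noteq> []" using len k_pos by auto
  have walk: "walk E (X1 @ X2 @ Y)" "hd (X1 @ X2 @ Y) = x" "last (X1 @ X2 @ Y) = v"
    and "distinct X2" using path by (auto simp: is_path_iff_walk)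
  have pieces: "W (X1 @ [?a]) = dG x ?a" "W X2 = dG ?a ?b" "W (?b # Y) = dG ?b v"
    using G.shortest_walk_append3[OF walk(1) \<open>X2 \<noteq> []\<close> walk(2,3) shortest finite] by auto
  have walks: "walk E (X1 @ [?a])" "walk E X2" "walk E (?b # Y)"
    using walk_append3_iff[OF \<open>X2 \<noteq> []\<close>] walk(1) by blast+
  have "set (X1 @ X2 @ Y) \<subseteq> V"
    using walk_subset[OF walk(1) G.E_subset] walk(2) \<open>x \<in> V\<close> by auto
  then have "?a \<in> V" "?b \<in> V" using \<open>X2 \<noteq> []\<close> by auto
  moreover have "is_path E ?a ?b X2"
    using walks(2) \<open>distinct X2\<close> by (simp add: is_path_iff_walk)
  ultimately obtain q where q: "is_path E ?a ?b q" "W q = dG ?a ?b" "length q = k"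
    "set q \<inter> C \<noteq> {}"
    using skeleton pieces(2) len by blast
  then obtain z q1 q2 where z: "z \<in> C" "q = q1 @ z # q2" by (metis disjoint_iff split_list)
  have "q \<noteq> []" "hd q = ?a" "last q = ?b" "walk E q"
    using q(1) by (auto simp: is_path_iff_walk)
  then have "walk E (X1 @ q @ Y)" "W (X1 @ q @ Y) = W (X1 @ X2 @ Y)"
    "hd (X1 @ q @ Y) = x" "last (X1 @ q @ Y) = v"
    using walks walk_append3_iff[of q E X1 Y] path_weight_append3[of q wG X1 Y]
      path_weight_append3[of X2 wG X1 Y] \<open>X2 \<noteq> []\<close> q(2) pieces(2) walk(2,3)
    by (auto simp: hd_append last_append)
  then show ?thesis
    using that[of z q1 q2] z q(3) shortest by simp
qed

lemma skeleton_split_shortest_path: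
  assumes "is_path E x v (X1 @ X2 @ Y)" "W (X1 @ X2 @ Y) = dG x v"
    and "dG x v \<noteq> \<infinity>" "x \<in> V" "length X2 = k"
  obtains z where "z \<in> C" "hop_dist E wG (length X1 + k - 1) x z = dG x z"
    "hop_dist E wG (k + length Y - 1) z v = dG z v" "dG x z + dG z v = dG x v"
proof -
  obtain z q1 q2 where z: "z \<in> C" "length (q1 @ z # q2) = k"
    and R: "walk E ((X1 @ q1) @ [z] @ q2 @ Y)" "hd ((X1 @ q1) @ [z] @ q2 @ Y) = x"
      "last ((X1 @ q1) @ [z] @ q2 @ Y) = v" "W ((X1 @ q1) @ [z] @ q2 @ Y) = dG x v"
    using skeleton_reroute[OF assms] by (metis append.assoc append_Cons append_Nil)
  have pieces: "W (X1 @ q1 @ [z]) = dG x z" "W (z # q2 @ Y) = dG z v"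
    using G.shortest_walk_append3[OF R(1) _ R(2,3) R(4) assms(3)] by auto
  have "walk E (X1 @ q1 @ [z])" "walk E (z # q2 @ Y)"
    using walk_append3_iff[of "[z]" E "X1 @ q1" "q2 @ Y"] R(1) by auto
  moreover have "hd (X1 @ q1 @ [z]) = x" "last (z # q2 @ Y) = v"
    using R(2,3) by (auto simp: hd_append last_append)
  ultimately have "hop_dist E wG (length X1 + k - 1) x z = dG x z"
    "hop_dist E wG (k + length Y - 1) z v = dG z v"
    using G.shortest_walk_hop_dist[of "X1 @ q1 @ [z]" "length X1 + k - 1"]
      G.shortest_walk_hop_dist[of "z # q2 @ Y" "k + length Y - 1"] pieces z(2)
    by auto
  moreover have "dG x z + dG z v = dG x v"
    using path_weight_append3[of "[z]" wG "X1 @ q1" "q2 @ Y"] pieces R(4) by simp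
  ultimately show ?thesis using that z(1) by blast
qed

text \<open>Induction on the number of hops: the last k + 1 nodes of a shortest path contain a
  skeleton node z; the estimate \<open>dt\<close> covers z..y, the induction hypothesis covers x..z.\<close>

lemma distH_le_twice_dG_if_hop_dist:
  assumes "x \<in> C" "y \<in> C" "hop_dist E wG m x y = dG x y"
  shows "distH x y \<le> 2 * dG x y"
  using assms(2,3)
proof (induction m arbitrary: y rule: less_induct)
  case (less m y)
  show ?case
  proof (cases "dG x y = \<infinity>")
    case False
    then obtain p where p: "is_path E x y p" "length p - 1 \<le> m" "W p = dG x y"
      using G.hop_dist_attained less.prems(2) by metis
    show ?thesis
    proof (cases "length p \<le> h + 1")
      case True
      then have "hop_dist E wG h x y \<le> dG x y"
        using hop_dist_le_path_weight[OF p(1), of h wG] p(3) by simp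
      then have "2 * hop_dist E wG h x y \<le> 2 * dG x y"
        by (rule ereal_mult_left_mono) simp
      then show ?thesis
        using distH_le_twice_hop_dist[OF assms(1) less.prems(1) order.refl] by simp
    next
      case False
      then have "k \<le> length (butlast p)" using k_le_h by simp
      then obtain X1 X2 where X: "butlast p = X1 @ X2" "length X2 = k"
        using split_list_length_suffix by blast
      have "p = X1 @ X2 @ [y]"
        using p(1) X(1) by (metis append_assoc append_butlast_last_id is_path_def)
      then obtain z where z: "z \<in> C" "hop_dist E wG (length X1 + k - 1) x z = dG x z"
        "hop_dist E wG k z y = dG z y" "dG x z + dG z y = dG x y"
        using skeleton_split_shortest_path[of x y X1 X2 "[y]"] p \<open>dG x y \<noteq> \<infinity>\<close> X(2)
          assms(1) C_subset by auto
      have "length X1 + k - 1 < m"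
        using p(2) X \<open>p = X1 @ X2 @ [y]\<close> k_pos by simp
      then have "distH x z \<le> 2 * dG x z" using less.IH z(1,2) by blast
      moreover have "distH z y \<le> 2 * dG z y"
        using distH_le_twice_hop_dist[OF z(1) less.prems(1) k_le_h] z(3) by simp
      ultimately have "distH x y \<le> 2 * dG x z + 2 * dG z y"
        using H.gdist_triangle[of x y z] add_mono order_trans by blast
      also have "\<dots> = 2 * dG x y"
        using z(4) G.gdist_nonneg by (metis ereal_right_distrib)
      finally show ?thesis .
    qed
  qed simp
qed

lemma distH_le_twice_dG:
  assumes "x \<in> C" "y \<in> C"
  shows "distH x y \<le> 2 * dG x y"
proof (cases "dG x y = \<infinity>")
  case False
  then obtain p where "is_path E x y p" "W p = dG x y"
    using G.gdist_attained by blast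
  then have "hop_dist E wG (length p - 1) x y = dG x y"
    using G.shortest_walk_hop_dist[of p "length p - 1"] by (auto simp: is_path_iff_walk)
  then show ?thesis using distH_le_twice_dG_if_hop_dist assms by blast
qed simp

lemma G'_weight_walk_le: "walk E p \<Longrightarrow> path_weight w' p \<le> 2 * W p"
proof -
  assume "walk E p"
  then have "path_weight w' p \<le> path_weight (\<lambda>a b. 2 * wG a b) p"
    by (rule path_weight_mono) (auto simp: G'_weight_def)
  also have "\<dots> = 2 * W p" using \<open>walk E p\<close> by (rule G.path_weight_double)
  finally show ?thesis .
qed

lemma D_le_path_weight:
  assumes "is_path E s v p" "length p - 1 \<le> h"
  shows "D v \<le> 2 * W p"
proof -
  have "is_path E' s v p" using assms(1) walk_mono[of E p E'] by (auto simp: is_path_iff_walk)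
  then have "D v \<le> path_weight w' p" using assms(2) by (rule hop_dist_le_path_weight)
  also have "\<dots> \<le> 2 * W p" using assms(1) G'_weight_walk_le by (auto simp: is_path_iff_walk)
  finally show ?thesis .
qed

lemma D_le_distH_hop_dist:
  assumes "y \<in> C"
  shows "D v \<le> distH s y + 2 * hop_dist E wG (h - 1) y v"
proof (cases "hop_dist E wG (h - 1) y v = \<infinity>")
  case True
  then show ?thesis using H.gdist_nonneg[of s y] by simp
next
  case False
  then obtain p where p: "is_path E y v p" "length p - 1 \<le> h - 1"
    "W p = hop_dist E wG (h - 1) y v"
    by (rule G.hop_dist_attained)
  have walk: "walk E p" "hd p = y" "last p = v" "distinct p" "p \<noteq> []"
    using p(1) by (auto simp: is_path_iff_walk is_path_def)
  have "D v \<le> distH s y + 2 * W p"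
  proof (cases "s \<in> set p")
    case True
    then obtain p1 p2 where "p = p1 @ s # p2" by (meson split_list)
    then have "is_path E s v (s # p2)" "length (s # p2) - 1 \<le> h" "W (s # p2) \<le> W p"
      using walk walk_appendD2[of E p1 "s # p2"] G.path_weight_suffix_le[of p1 "s # p2"] p(2)
      by (auto simp: is_path_iff_walk)
    then have "D v \<le> 2 * W p"
      using D_le_path_weight ereal_mult_left_mono[of "W (s # p2)" "W p" 2] by force
    then show ?thesis using H.gdist_nonneg[of s y] by (simp add: add_increasing)
  next
    case False
    have "walk E' p" using walk(1) by (rule walk_mono) simp
    then have "is_path E' s v (s # p)"
      using walk False assms by (auto simp: is_path_iff_walk walk_Cons)
    then have "D v \<le> path_weight w' (s # p)"
      using p(2) h_pos by (intro hop_dist_le_path_weight) auto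
    also have "\<dots> = w' s y + path_weight w' p" using walk by (simp add: path_weight_Cons)
    also have "\<dots> \<le> distH s y + 2 * W p"
      using G'_weight_walk_le[OF walk(1)] assms by (intro add_mono) (auto simp: G'_weight_def)
    finally show ?thesis .
  qed
  then show ?thesis using p(3) by simp
qed

lemma D_le_distH_dG:
  assumes "y \<in> C"
  shows "D v \<le> distH s y + 2 * dG y v"
proof (cases "dG y v = \<infinity>")
  case True
  then show ?thesis using H.gdist_nonneg[of s y] by simp
next
  case False
  then obtain p where p: "is_path E y v p" "W p = dG y v" by (rule G.gdist_attained)
  show ?thesis
  proof (cases "length p \<le> h")
    case True
    then have "hop_dist E wG (h - 1) y v \<le> dG y v"
      using hop_dist_le_path_weight[OF p(1), of "h - 1" wG] p(2) by simp
    then have "2 * hop_dist E wG (h - 1) y v \<le> 2 * dG y v"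
      by (rule ereal_mult_left_mono) simp
    then show ?thesis
      using D_le_distH_hop_dist[OF assms, of v] add_left_mono order_trans by blast
  next
    case False
    then obtain X1 X2 where "p = X1 @ X2 @ []" "length X2 = k"
      using split_list_length_suffix[of k p] k_le_h by auto
    then obtain z where z: "z \<in> C" "hop_dist E wG (k - 1) z v = dG z v"
      "dG y z + dG z v = dG y v"
      using skeleton_split_shortest_path[of y v X1 X2 "[]"] p \<open>dG y v \<noteq> \<infinity>\<close> assms C_subset
      by auto
    have "k - 1 \<le> h - 1" using k_le_h by (rule diff_le_mono)
    then have "hop_dist E wG (h - 1) z v \<le> dG z v" using hop_dist_antimono z(2) by metis
    then have "2 * hop_dist E wG (h - 1) z v \<le> 2 * dG z v"
      by (rule ereal_mult_left_mono) simp
    then have "D v \<le> distH s z + 2 * dG z v"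
      using D_le_distH_hop_dist[OF z(1), of v] add_left_mono order_trans by blast
    also have "\<dots> \<le> distH s y + distH y z + 2 * dG z v"
      using H.gdist_triangle[of s z y] by (rule add_right_mono)
    also have "\<dots> \<le> distH s y + 2 * dG y z + 2 * dG z v"
      using distH_le_twice_dG[OF assms z(1)] by (intro add_mono) simp_all
    also have "\<dots> = distH s y + 2 * dG y v"
      using z(3) G.gdist_nonneg by (metis add.assoc ereal_right_distrib)
    finally show ?thesis .
  qed
qed

lemma G'_path_tail:
  assumes "walk E' (s # r)" "s \<notin> set r" "r \<noteq> []"
  shows "walk E r" and "path_weight w' r = 2 * W r"
proof -
  have "walk E' r" using assms(1,3) by (simp add: walk_Cons)
  then show "walk E r" by (rule walk_mono) (use assms(2) in auto)
  then have "path_weight w' r = path_weight (\<lambda>a b. 2 * wG a b) r"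
    by (rule path_weight_cong) (use assms(2) in \<open>auto simp: G'_weight_def\<close>)
  then show "path_weight w' r = 2 * W r" using G.path_weight_double[OF \<open>walk E r\<close>] by simp
qed

text \<open>A simple path from s can use an edge of \<open>{s} \<times> C\<close> only as its first edge.\<close>

lemma G'_path_weight_ge:
  assumes "is_path E' s u p"
  obtains y where "y \<in> C" "distH s y + 2 * dG y u \<le> path_weight w' p"
proof -
  have walk: "walk E' p" "last p = u" "distinct p" "hd p = s" "p \<noteq> []"
    using assms by (auto simp: is_path_iff_walk is_path_def)
  then obtain r where p: "p = s # r" by (cases p) auto
  show ?thesis
  proof (cases "r = []")
    case True
    then show ?thesis
      using that[of s] s_in_C walk(2) p G.gdist_refl H.gdist_refl by simp
  next
    case False
    let ?y = "hd r"
    have "s \<notin> set r" using walk(3) p by simp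
    note tail = G'_path_tail[OF walk(1)[unfolded p] this False]
    have weight: "path_weight w' p = w' s ?y + 2 * W r"
      using tail(2) False p by (simp add: path_weight_Cons)
    have "dG ?y u \<le> W r"
      using G.gdist_le_walk[OF tail(1)] walk(2) p False by simp
    then have tail_le: "2 * dG ?y u \<le> 2 * W r" by (rule ereal_mult_left_mono) simp
    have "(s, ?y) \<in> E'" using walk(1) p False by (simp add: walk_Cons)
    then have "?y \<in> C \<and> distH s ?y \<le> w' s ?y \<or> (s, ?y) \<in> E \<and> 2 * wG s ?y \<le> w' s ?y"
      by (auto simp: G'_weight_def)
    then consider "?y \<in> C" "distH s ?y \<le> w' s ?y" | "(s, ?y) \<in> E" "2 * wG s ?y \<le> w' s ?y"
      by blast
    then show ?thesis
    proof cases
      case 1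
      then show ?thesis using that weight tail_le by (auto intro: add_mono)
    next
      case 2
      then have "walk E (s # r)" using tail(1) by (simp add: walk_Cons)
      then have "dG s u \<le> W (s # r)"
        using G.gdist_le_walk[of "s # r"] walk(2) p False by simp
      then have "2 * dG s u \<le> 2 * W (s # r)" by (rule ereal_mult_left_mono) simp
      also have "\<dots> = 2 * wG s ?y + 2 * W r"
        using 2(1) G.weight_nonneg G.path_weight_nonneg[OF tail(1)] False
        by (simp add: path_weight_Cons ereal_right_distrib)
      also have "\<dots> \<le> path_weight w' p" using weight 2(2) by (simp add: add_right_mono)
      finally show ?thesis using that[of s] s_in_C H.gdist_refl by simp
    qed
  qed
qed

lemma dG_le_D: "dG s v \<le> D v"
  unfolding hop_dist_def[of E']
proof (rule INF_greatest)
  fix p assume "p \<in> {p. is_path E' s v p \<and> length p - 1 \<le> h}"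
  then obtain y where y: "y \<in> C" "distH s y + 2 * dG y v \<le> path_weight w' p"
    using G'_path_weight_ge by blast
  have "dG s v \<le> dG s y + dG y v" by (rule G.gdist_triangle)
  also have "\<dots> \<le> distH s y + 2 * dG y v"
  proof (rule add_mono)
    show "dG s y \<le> distH s y" by (rule dG_le_distH[OF s_in_C y(1)])
    show "dG y v \<le> 2 * dG y v" using G.gdist_nonneg[of y v] by (cases "dG y v") auto
  qed
  also note y(2)
  finally show "dG s v \<le> path_weight w' p" .
qed

lemma D_le_twice_dG: "D v \<le> 2 * dG s v"
  using D_le_distH_dG[OF s_in_C, of v] H.gdist_refl by simp

lemma D_edge_le:
  assumes "(u, v) \<in> E"
  shows "D v \<le> D u + 2 * wG u v"
proof (cases "D u = \<infinity>")
  case True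
  then show ?thesis using G.weight_nonneg[OF assms] by simp
next
  case False
  then obtain p where p: "is_path E' s u p" "path_weight w' p = D u"
    by (rule G'.hop_dist_attained)
  then obtain y where y: "y \<in> C" "distH s y + 2 * dG y u \<le> D u"
    using G'_path_weight_ge by metis
  have "dG y v \<le> dG y u + wG u v"
    using G.gdist_triangle[of y v u] dG_le_edge[OF assms] by (meson add_left_mono order_trans)
  then have "2 * dG y v \<le> 2 * dG y u + 2 * wG u v"
    using ereal_mult_left_mono[of "dG y v" "dG y u + wG u v" 2] G.gdist_nonneg[of y u]
      G.weight_nonneg[OF assms] by (simp add: ereal_right_distrib)
  then have "distH s y + 2 * dG y v \<le> distH s y + 2 * dG y u + 2 * wG u v"
    by (simp add: add_left_mono add.assoc)
  then have "D v \<le> distH s y + 2 * dG y u + 2 * wG u v"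
    using D_le_distH_dG[OF y(1), of v] by (rule order_trans[rotated])
  also have "\<dots> \<le> D u + 2 * wG u v" using y(2) by (rule add_right_mono)
  finally show ?thesis .
qed

end

theorem mainTheorem3:
  fixes V :: "'a set" and E :: "('a \<times> 'a) set" and w :: "'a \<Rightarrow> 'a \<Rightarrow> nat"
    and s :: 'a and h :: nat and C :: "'a set" and dt :: "'a \<Rightarrow> 'a \<Rightarrow> ereal"
  defines "wG \<equiv> (\<lambda>a b. ereal (real (w a b)))"
  defines "distH \<equiv> gdist (C \<times> C) dt"
  defines "E' \<equiv> E \<union> ({s} \<times> C)"
  defines "dhat \<equiv> (\<lambda>v. hop_dist E' (G'_weight E wG s C distH) h s v / 2)"
  assumes finV: "finite V" and EV: "E \<subseteq> V \<times> V" and sV: "s \<in> V"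
    and h1: "1 \<le> h" and hn: "h \<le> card V"
    and CV: "C \<subseteq> V" and sC: "s \<in> C"
    and skel: "\<forall>u\<in>V. \<forall>v\<in>V.
        (\<exists>p. is_path E u v p \<and> path_weight wG p = gdist E wG u v
              \<and> length p = nat \<lceil>real h / 2\<rceil>)
        \<longrightarrow> (\<exists>p. is_path E u v p \<and> path_weight wG p = gdist E wG u v
              \<and> length p = nat \<lceil>real h / 2\<rceil> \<and> set p \<inter> C \<noteq> {})"
    and est: "\<forall>x\<in>C. \<forall>v\<in>V. gdist E wG x v \<le> dt x v \<and> dt x v \<le> 2 * hop_dist E wG h x v"
  shows "(\<forall>v\<in>V. gdist E wG s v / 2 \<le> dhat v \<and> dhat v \<le> gdist E wG s v)
       \<and> (\<forall>(u, v)\<in>E. dhat v \<le> dhat u + wG u v)"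
proof -
  interpret skeleton_setup V E wG s h C dt
    by unfold_locales (use finV EV sV h1 CV sC skel est in \<open>auto simp: wG_def; blast\<close>)+
  have "dG s v / 2 \<le> D v / 2" for v using dG_le_D by simp
  moreover have "D v / 2 \<le> dG s v" for v
    using D_le_twice_dG by (simp add: ereal_divide_le_pos)
  moreover have "D v / 2 \<le> D u / 2 + wG u v" if "(u, v) \<in> E" for u v
    using G'.hop_dist_nonneg G.weight_nonneg[OF that] D_edge_le[OF that] by (rule ereal_half_le_add)
  ultimately show ?thesis unfolding dhat_def distH_def E'_def by auto
qed

end
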